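(* Let $n\ge2$ and let $M$ be a nonderogatory $d\times d$ complex matrix with minimal polynomial $\mathbf p$. Every maximal subalgebra $\mathcal B$ of $\mathcal T_{n,d}[\mathcal P(M)]$ equals $\mathfrak B(\mathbf p_+,\mathbf p_-,\boldsymbol\chi)$ for some polynomials $\mathbf p_+,\mathbf p_-,\boldsymbol\chi\in\mathbb C[X]$ with $\mathbf p_+\mathbf p_-$ dividing $\mathbf p$ and $\boldsymbol\chi$ relatively prime to $\mathbf p$.
   Context: A nonderogatory matrix is one whose minimal polynomial equals its characteristic polynomial; $\mathcal P(M)$ is the algebra of polynomials in $M$; $\mathcal T_{n,d}[\mathcal P(M)]$ is the set of $n\times n$ block Toeplitz matrices $(B_{i-j})_{i,j=0}^{n-1}$ with all $B_m\in\mathcal P(M)$. A maximal subalgebra of $\mathcal T_{n,d}[\mathcal P(M)]$ is a subalgebra (linear subspace closed under multiplication) contained in it and maximal under inclusion among such. For $\mathbf p_+,\mathbf p_-,\boldsymbol\chi$ with $\mathbf p_+\mathbf p_-\mid\mathbf p$ and $\boldsymbol\chi$ coprime to $\mathbf p$, and $\mathbf q=\mathbf p/(\mathbf p_+\mathbf p_-)$, $\mathfrak B(\mathbf p_+,\mathbf p_-,\boldsymbol\chi)$ is the set of block Toeplitz matrices $A=(A_{i-j})$ with all $A_i\in\mathcal P(M)$ such that for each $i=1,\dots,n-1$ there are polynomials $\mathbf a_i,\mathbf a_{i-n}$ with $A_i=\mathbf p_+(M)\mathbf a_i(M)$, $A_{i-n}=\mathbf p_-(M)\mathbf a_{i-n}(M)$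 and $\mathbf q\mid\mathbf a_i-\boldsymbol\chi\mathbf a_{i-n}$. *)

theory Defs
  imports "Jordan_Normal_Form.Char_Poly"
begin

definition poly_mat :: "complex poly \<Rightarrow> complex mat \<Rightarrow> complex mat" where
  "poly_mat p M = mat (dim_row M) (dim_col M)
     (\<lambda>(i,j). \<Sum>k\<le>degree p. coeff p k * (M ^\<^sub>m k) $$ (i,j))"

definition is_min_poly :: "complex mat \<Rightarrow> complex poly \<Rightarrow> bool" where
  "is_min_poly M p \<longleftrightarrow> monic p \<and> poly_mat p M = 0\<^sub>m (dim_row M) (dim_col M) \<and>
     (\<forall>q. poly_mat q M = 0\<^sub>m (dim_row M) (dim_col M) \<longrightarrow> p dvd q)"

definition nonderogatory :: "complex mat \<Rightarrow> bool" where
  "nonderogatory M \<longleftrightarrow> is_min_poly M (char_poly M)"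

definition polys_in :: "complex mat \<Rightarrow> complex mat set" where
  "polys_in M = {poly_mat q M | q. True}"

(* the nd x nd block Toeplitz matrix (B_{i-j})_{i,j=0}^{n-1} with d x d blocks *)
definition block_toeplitz :: "nat \<Rightarrow> nat \<Rightarrow> (int \<Rightarrow> complex mat) \<Rightarrow> complex mat" where
  "block_toeplitz n d B = mat (n*d) (n*d)
     (\<lambda>(i,j). B (int (i div d) - int (j div d)) $$ (i mod d, j mod d))"

definition toeplitz_alg :: "nat \<Rightarrow> nat \<Rightarrow> complex mat \<Rightarrow> complex mat set" where
  "toeplitz_alg n d M = {block_toeplitz n d B | B. \<forall>m. \<bar>m\<bar> < int n \<longrightarrow> B m \<in> polys_in M}"

definition is_subalgebra :: "nat \<Rightarrow> complex mat set \<Rightarrow> bool" where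
  "is_subalgebra N S \<longleftrightarrow> S \<subseteq> carrier_mat N N \<and> 0\<^sub>m N N \<in> S \<and>
     (\<forall>A\<in>S. \<forall>B\<in>S. A + B \<in> S) \<and> (\<forall>c. \<forall>A\<in>S. c \<cdot>\<^sub>m A \<in> S) \<and>
     (\<forall>A\<in>S. \<forall>B\<in>S. A * B \<in> S)"

definition maximal_subalgebra_of :: "nat \<Rightarrow> complex mat set \<Rightarrow> complex mat set \<Rightarrow> bool" where
  "maximal_subalgebra_of N T S \<longleftrightarrow> is_subalgebra N S \<and> S \<subseteq> T \<and>
     (\<forall>S'. is_subalgebra N S' \<and> S' \<subseteq> T \<and> S \<subseteq> S' \<longrightarrow> S' = S)"

definition frakB :: "nat \<Rightarrow> nat \<Rightarrow> complex mat \<Rightarrow> complex poly \<Rightarrow> complex poly \<Rightarrow> complex poly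
    \<Rightarrow> complex poly \<Rightarrow> complex mat set" where
  "frakB n d M p pp pm chi = {block_toeplitz n d A | A.
     (\<forall>m. \<bar>m\<bar> < int n \<longrightarrow> A m \<in> polys_in M) \<and>
     (\<forall>i\<in>{1..int n - 1}. \<exists>a a'.
         A i = poly_mat pp M * poly_mat a M \<and>
         A (i - int n) = poly_mat pm M * poly_mat a' M \<and>
         (p div (pp * pm)) dvd (a - chi * a'))}"

end

theory Submission
  imports Defs "HOL-Computational_Algebra.Field_as_Ring"
    "HOL-Computational_Algebra.Fundamental_Theorem_Algebra"
begin

text \<open>
  Write a matrix of the Toeplitz algebra as \<open>(F(i - j)(M))\<close> with polynomial symbols \<open>F\<close>.
  A product of two such matrices with symbols \<open>F, G\<close> is again block Toeplitz iff
  \<open>p\<close> divides \<open>F(s) G(u - n) - F(s - n) G(u)\<close> for all \<open>1 \<le> s, u < n\<close>: the \<open>(i + 1, j + 1)\<close>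
  and \<open>(i, j)\<close> blocks of the product differ by exactly such a term.
  Hence in a subalgebra all pairs \<open>(F(s), F(s - n))\<close> are proportional modulo \<open>p\<close>.
  Let \<open>p\<^sub>+\<close> and \<open>p\<^sub>-\<close> be the greatest common divisors of \<open>p\<close> with all upper, resp. all lower,
  symbols, and \<open>q = p / (p\<^sub>+ p\<^sub>-)\<close>. The reduced pairs \<open>(a, a')\<close> are still proportional
  modulo \<open>q\<close>, and neither all \<open>a\<close> nor all \<open>a'\<close> share a factor with \<open>q\<close>; a Bezout argument in
  the ideal generated by \<open>q\<close> and the \<open>a'\<close> then yields \<open>\<chi>\<close> with \<open>a \<equiv> \<chi> a' (mod q)\<close>,
  and adding a generic multiple of \<open>q\<close> makes \<open>\<chi>\<close> coprime to \<open>p\<close>.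
  So every subalgebra lies in some \<open>\<frak>B(p\<^sub>+, p\<^sub>-, \<chi>)\<close>, which is itself a subalgebra;
  maximality gives equality.
\<close>

section \<open>Polynomials evaluated at a matrix\<close>

lemma poly_mat_carrier [simp]: "M \<in> carrier_mat d d \<Longrightarrow> poly_mat f M \<in> carrier_mat d d"
  unfolding poly_mat_def by auto

lemma dim_poly_mat [simp]:
  "dim_row (poly_mat f M) = dim_row M" "dim_col (poly_mat f M) = dim_col M"
  unfolding poly_mat_def by auto

lemma index_poly_mat:
  assumes "M \<in> carrier_mat d d" "i < d" "j < d" "degree f \<le> N"
  shows "poly_mat f M $$ (i,j) = (\<Sum>k\<le>N. coeff f k * (M ^\<^sub>m k) $$ (i,j))"
proof -
  have "poly_mat f M $$ (i,j) = (\<Sum>k\<le>degree f. coeff f k * (M ^\<^sub>m k) $$ (i,j))"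
    using assms unfolding poly_mat_def by auto
  also have "\<dots> = (\<Sum>k\<le>N. coeff f k * (M ^\<^sub>m k) $$ (i,j))"
    by (rule sum.mono_neutral_left) (use assms in \<open>auto simp: coeff_eq_0\<close>)
  finally show ?thesis .
qed

lemma poly_mat_add:
  assumes M: "M \<in> carrier_mat d d"
  shows "poly_mat (f + g) M = poly_mat f M + poly_mat g M"
proof (rule eq_matI)
  fix i j assume "i < dim_row (poly_mat f M + poly_mat g M)" "j < dim_col (poly_mat f M + poly_mat g M)"
  then have ij: "i < d" "j < d" using M by auto
  let ?N = "max (degree f) (degree g)"
  have "degree (f + g) \<le> ?N" by (simp add: degree_add_le)
  then show "poly_mat (f + g) M $$ (i, j) = (poly_mat f M + poly_mat g M) $$ (i, j)"
    using ij M by (simp add: index_poly_mat[OF M ij] index_poly_mat[OF M ij, of f ?N]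
        index_poly_mat[OF M ij, of g ?N] distrib_right sum.distrib)
qed (use M in auto)

lemma poly_mat_smult:
  assumes M: "M \<in> carrier_mat d d"
  shows "poly_mat (Polynomial.smult c f) M = c \<cdot>\<^sub>m poly_mat f M"
proof (rule eq_matI)
  fix i j assume "i < dim_row (c \<cdot>\<^sub>m poly_mat f M)" "j < dim_col (c \<cdot>\<^sub>m poly_mat f M)"
  then have ij: "i < d" "j < d" using M by auto
  have "degree (Polynomial.smult c f) \<le> degree f" by simp
  then show "poly_mat (Polynomial.smult c f) M $$ (i, j) = (c \<cdot>\<^sub>m poly_mat f M) $$ (i, j)"
    using ij M by (simp add: index_poly_mat[OF M ij] index_poly_mat[OF M ij, of f "degree f"]
        sum_distrib_left mult.assoc)
qed (use M in auto)

lemma poly_mat_0: "M \<in> carrier_mat d d \<Longrightarrow> poly_mat 0 M = 0\<^sub>m d d"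
  unfolding poly_mat_def by (auto intro!: eq_matI)

lemma poly_mat_const: "M \<in> carrier_mat d d \<Longrightarrow> poly_mat [:c:] M = c \<cdot>\<^sub>m 1\<^sub>m d"
  unfolding poly_mat_def by (auto intro!: eq_matI)

lemma pow_mat_commute:
  assumes M: "M \<in> carrier_mat d d"
  shows "M ^\<^sub>m k * M = M * M ^\<^sub>m k"
proof (induction k)
  case 0
  then show ?case using M by simp
next
  case (Suc k)
  have "M ^\<^sub>m Suc k * M = (M * M ^\<^sub>m k) * M" using Suc by simp
  also have "\<dots> = M * (M ^\<^sub>m k * M)" using M by (simp add: assoc_mult_mat[of _ d d _ d _ d])
  finally show ?case by simp
qed

lemma poly_mat_pCons_0:
  assumes M: "M \<in> carrier_mat d d"
  shows "poly_mat (pCons 0 f) M = M * poly_mat f M"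
proof (rule eq_matI)
  fix i j assume "i < dim_row (M * poly_mat f M)" "j < dim_col (M * poly_mat f M)"
  then have ij: "i < d" "j < d" using M by auto
  have pow_Suc: "(M ^\<^sub>m Suc k) $$ (i,j) = (\<Sum>l<d. M $$ (i,l) * (M ^\<^sub>m k) $$ (l,j))" for k
    using pow_mat_commute[OF M, of k] M ij by (simp add: scalar_prod_def atLeast0LessThan)
  have "degree (pCons 0 f) \<le> Suc (degree f)" by (simp add: degree_pCons_le)
  then have "poly_mat (pCons 0 f) M $$ (i, j)
      = (\<Sum>k\<le>Suc (degree f). coeff (pCons 0 f) k * (M ^\<^sub>m k) $$ (i,j))"
    by (rule index_poly_mat[OF M ij])
  also have "\<dots> = (\<Sum>k\<le>degree f. coeff f k * (\<Sum>l<d. M $$ (i,l) * (M ^\<^sub>m k) $$ (l,j)))"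
    unfolding sum.atMost_Suc_shift pow_Suc by simp
  also have "\<dots> = (\<Sum>l<d. M $$ (i,l) * (\<Sum>k\<le>degree f. coeff f k * (M ^\<^sub>m k) $$ (l,j)))"
    by (simp add: sum_distrib_left mult.left_commute sum.swap[of _ "{..degree f}"])
  also have "\<dots> = (M * poly_mat f M) $$ (i, j)"
    using M ij by (simp add: scalar_prod_def atLeast0LessThan index_poly_mat[OF M _ _ order_refl])
  finally show "poly_mat (pCons 0 f) M $$ (i, j) = (M * poly_mat f M) $$ (i, j)" .
qed (use M in auto)

lemma poly_mat_mult:
  assumes M: "M \<in> carrier_mat d d"
  shows "poly_mat (f * g) M = poly_mat f M * poly_mat g M"
proof (induction f rule: pCons_induct)
  case 0
  show ?case using M by (simp add: poly_mat_0)
next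
  case (pCons a f)
  have c: "poly_mat f M \<in> carrier_mat d d" "poly_mat g M \<in> carrier_mat d d" using M by auto
  have "poly_mat (pCons a f * g) M = poly_mat (Polynomial.smult a g + pCons 0 (f * g)) M" by simp
  also have "\<dots> = a \<cdot>\<^sub>m poly_mat g M + M * (poly_mat f M * poly_mat g M)"
    using pCons.IH M by (simp add: poly_mat_add poly_mat_smult poly_mat_pCons_0)
  also have "\<dots> = (a \<cdot>\<^sub>m 1\<^sub>m d + M * poly_mat f M) * poly_mat g M"
    using M c by (simp add: add_mult_distrib_mat[of _ d d _ _ d] mult_smult_assoc_mat[OF one_carrier_mat c(2)]
        assoc_mult_mat[OF M c])
  also have "a \<cdot>\<^sub>m 1\<^sub>m d + M * poly_mat f M = poly_mat (pCons a f) M"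
    using M by (simp add: poly_mat_add[symmetric] poly_mat_const[symmetric] poly_mat_pCons_0[symmetric])
  finally show ?case .
qed

lemma poly_mat_diff:
  assumes M: "M \<in> carrier_mat d d"
  shows "poly_mat (f - g) M = poly_mat f M - poly_mat g M"
  using poly_mat_add[OF M, of "f - g" g] M by (auto intro!: eq_matI)

lemma poly_mat_eq_0_iff:
  assumes M: "M \<in> carrier_mat d d" and p: "is_min_poly M p"
  shows "poly_mat f M = 0\<^sub>m d d \<longleftrightarrow> p dvd f"
  using M p unfolding is_min_poly_def by (auto simp: poly_mat_mult elim!: dvdE)

lemma poly_mat_eq_iff:
  assumes M: "M \<in> carrier_mat d d" and p: "is_min_poly M p"
  shows "poly_mat f M = poly_mat g M \<longleftrightarrow> p dvd f - g"
proof -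
  have "poly_mat f M = poly_mat g M \<longleftrightarrow> poly_mat f M - poly_mat g M = 0\<^sub>m d d"
    using M by (auto simp: mat_eq_iff)
  then show ?thesis by (simp add: poly_mat_diff[OF M, symmetric] poly_mat_eq_0_iff[OF M p])
qed

lemma index_poly_mat_sum:
  assumes M: "M \<in> carrier_mat d d" and "i < d" "j < d"
  shows "poly_mat (\<Sum>k\<in>A. h k) M $$ (i,j) = (\<Sum>k\<in>A. poly_mat (h k) M $$ (i,j))"
  by (induction A rule: infinite_finite_induct) (use assms in \<open>auto simp: poly_mat_0 poly_mat_add\<close>)


section \<open>Block Toeplitz matrices with polynomial symbols\<close>

definition poly_toeplitz :: "nat \<Rightarrow> nat \<Rightarrow> complex mat \<Rightarrow> (int \<Rightarrow> complex poly) \<Rightarrow> complex mat" where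
  "poly_toeplitz n d M F = block_toeplitz n d (\<lambda>m. poly_mat (F m) M)"

lemma poly_toeplitz_carrier [simp]: "poly_toeplitz n d M F \<in> carrier_mat (n*d) (n*d)"
  unfolding poly_toeplitz_def block_toeplitz_def by auto

lemma dim_poly_toeplitz [simp]:
  "dim_row (poly_toeplitz n d M F) = n*d" "dim_col (poly_toeplitz n d M F) = n*d"
  unfolding poly_toeplitz_def block_toeplitz_def by auto

lemma block_index_less:
  assumes "i < n" "r < d"
  shows "i*d + r < n*(d::nat)"
proof -
  have "i*d + r < Suc i * d" using assms(2) by simp
  also have "\<dots> \<le> n * d" using assms(1) by (intro mult_right_mono) auto
  finally show ?thesis .
qed

lemma block_index_decomp:
  fixes I n d :: nat
  assumes "I < n*d"
  obtains i r where "i < n" "r < d" "I = i*d + r"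
proof
  have "d > 0" using assms by (cases d) auto
  then show "I div d < n" "I mod d < d" using assms by (auto simp: less_mult_imp_div_less)
qed simp

lemma index_poly_toeplitz:
  assumes "i < n" "j < n" "r < d" "c < d"
  shows "poly_toeplitz n d M F $$ (i*d + r, j*d + c) = poly_mat (F (int i - int j)) M $$ (r,c)"
  using assms block_index_less[of i n r d] block_index_less[of j n c d]
  unfolding poly_toeplitz_def block_toeplitz_def by simp

lemma poly_toeplitz_eqI:
  assumes "\<And>i j r c. i < n \<Longrightarrow> j < n \<Longrightarrow> r < d \<Longrightarrow> c < d \<Longrightarrow>
      A $$ (i*d + r, j*d + c) = poly_toeplitz n d M F $$ (i*d + r, j*d + c)"
    and "A \<in> carrier_mat (n*d) (n*d)"
  shows "A = poly_toeplitz n d M F"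
proof (rule eq_matI)
  fix I J assume "I < dim_row (poly_toeplitz n d M F)" "J < dim_col (poly_toeplitz n d M F)"
  then obtain i r j c where "i < n" "r < d" "I = i*d + r" "j < n" "c < d" "J = j*d + c"
    by (auto elim!: block_index_decomp)
  then show "A $$ (I, J) = poly_toeplitz n d M F $$ (I, J)" using assms(1) by blast
qed (use assms(2) in auto)

lemma block_toeplitz_cong:
  assumes "\<And>m. \<bar>m\<bar> < int n \<Longrightarrow> B m = B' m"
  shows "block_toeplitz n d B = block_toeplitz n d B'"
proof -
  have "\<bar>int (I div d) - int (J div d)\<bar> < int n" if "I < n*d" "J < n*d" for I J
    using that by (auto elim!: block_index_decomp)
  then show ?thesis using assms unfolding block_toeplitz_def by (auto intro!: eq_matI)
qed

lemma mem_toeplitz_alg_iff: "A \<in> toeplitz_alg n d M \<longleftrightarrow> (\<exists>F. A = poly_toeplitz n d M F)"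
proof
  assume "A \<in> toeplitz_alg n d M"
  then obtain B where A: "A = block_toeplitz n d B" and B: "\<forall>m. \<bar>m\<bar> < int n \<longrightarrow> B m \<in> polys_in M"
    unfolding toeplitz_alg_def by auto
  define F where "F m = (SOME f. B m = poly_mat f M)" for m
  have "B m = poly_mat (F m) M" if "\<bar>m\<bar> < int n" for m
    unfolding F_def by (rule someI_ex) (use B that in \<open>auto simp: polys_in_def\<close>)
  then have "A = poly_toeplitz n d M F" unfolding A poly_toeplitz_def by (rule block_toeplitz_cong)
  then show "\<exists>F. A = poly_toeplitz n d M F" by blast
qed (auto simp: toeplitz_alg_def poly_toeplitz_def polys_in_def)

lemma poly_toeplitz_0:
  "M \<in> carrier_mat d d \<Longrightarrow> poly_toeplitz n d M (\<lambda>_. 0) = 0\<^sub>m (n*d) (n*d)"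
  by (rule sym, rule poly_toeplitz_eqI) (auto simp: index_poly_toeplitz poly_mat_0 block_index_less)

lemma poly_toeplitz_add:
  "M \<in> carrier_mat d d \<Longrightarrow>
    poly_toeplitz n d M F + poly_toeplitz n d M G = poly_toeplitz n d M (\<lambda>m. F m + G m)"
  by (rule poly_toeplitz_eqI) (auto simp: index_poly_toeplitz poly_mat_add block_index_less)

lemma poly_toeplitz_smult:
  "M \<in> carrier_mat d d \<Longrightarrow>
    e \<cdot>\<^sub>m poly_toeplitz n d M F = poly_toeplitz n d M (\<lambda>m. Polynomial.smult e (F m))"
  by (rule poly_toeplitz_eqI) (auto simp: index_poly_toeplitz poly_mat_smult block_index_less)

lemma sum_lessThan_mult_blocks:
  fixes n d :: nat
  shows "(\<Sum>K<n*d. f K :: 'a :: comm_monoid_add) = (\<Sum>k<n. \<Sum>l<d. f (k*d + l))"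
proof -
  have "sum f {k*d..<k*d + d} = (\<Sum>l<d. f (k*d + l))" for k
  proof -
    have "{k*d..<k*d + d} = (\<lambda>l. k*d + l) ` {..<d}"
      by (simp add: lessThan_atLeast0 image_add_atLeastLessThan add.commute)
    then show ?thesis by (simp add: sum.reindex)
  qed
  then show ?thesis using sum.nat_group[of f d n] by simp
qed

definition toeplitz_conv :: "nat \<Rightarrow> (int \<Rightarrow> complex poly) \<Rightarrow> (int \<Rightarrow> complex poly) \<Rightarrow> nat \<Rightarrow> nat
    \<Rightarrow> complex poly" where
  "toeplitz_conv n F G i j = (\<Sum>k<n. F (int i - int k) * G (int k - int j))"

lemma index_mult_poly_toeplitz:
  assumes M: "M \<in> carrier_mat d d" and ij: "i < n" "j < n" and rc: "r < d" "c < d"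
  shows "(poly_toeplitz n d M F * poly_toeplitz n d M G) $$ (i*d + r, j*d + c)
    = poly_mat (toeplitz_conv n F G i j) M $$ (r,c)"
proof -
  let ?A = "poly_toeplitz n d M F" and ?B = "poly_toeplitz n d M G"
  have "(?A * ?B) $$ (i*d + r, j*d + c) = (\<Sum>K<n*d. ?A $$ (i*d + r, K) * ?B $$ (K, j*d + c))"
    using block_index_less[OF ij(1) rc(1)] block_index_less[OF ij(2) rc(2)]
    by (simp add: scalar_prod_def atLeast0LessThan)
  also have "\<dots> = (\<Sum>k<n. \<Sum>l<d. ?A $$ (i*d + r, k*d + l) * ?B $$ (k*d + l, j*d + c))"
    by (rule sum_lessThan_mult_blocks)
  also have "\<dots> = (\<Sum>k<n. (poly_mat (F (int i - int k)) M * poly_mat (G (int k - int j)) M) $$ (r,c))"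
    using ij rc M by (intro sum.cong refl) (simp add: index_poly_toeplitz scalar_prod_def atLeast0LessThan)
  also have "\<dots> = poly_mat (toeplitz_conv n F G i j) M $$ (r,c)"
    unfolding toeplitz_conv_def poly_mat_mult[OF M, symmetric] by (rule index_poly_mat_sum[symmetric, OF M rc])
  finally show ?thesis .
qed


section \<open>When is a product of block Toeplitz matrices block Toeplitz\<close>

lemma toeplitz_conv_Suc_Suc:
  assumes "Suc i < n" "Suc j < n"
  shows "toeplitz_conv n F G (Suc i) (Suc j) - toeplitz_conv n F G i j =
         F (int i + 1) * G (- int j - 1) - F (int i + 1 - int n) * G (int n - 1 - int j)"
proof -
  obtain n' where n: "n = Suc n'" using assms by (cases n) auto
  have "toeplitz_conv n F G (Suc i) (Suc j)
      = F (int i + 1) * G (- int j - 1) + (\<Sum>k<n'. F (int i - int k) * G (int k - int j))"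
  proof -
    have "int (Suc i) - int (Suc k) = int i - int k" "int (Suc k) - int (Suc j) = int k - int j" for k
      by simp_all
    moreover have "int (Suc i) - int 0 = int i + 1" "int 0 - int (Suc j) = - int j - 1" by simp_all
    ultimately show ?thesis unfolding toeplitz_conv_def n sum.lessThan_Suc_shift by presburger
  qed
  moreover have "toeplitz_conv n F G i j
      = (\<Sum>k<n'. F (int i - int k) * G (int k - int j)) + F (int i - int n') * G (int n' - int j)"
    unfolding toeplitz_conv_def n sum.lessThan_Suc by simp
  moreover have "int i - int n' = int i + 1 - int n" "int n' - int j = int n - 1 - int j"
    using n by auto
  ultimately show ?thesis by (simp add: algebra_simps)
qed

definition toeplitz_mult_cond :: "nat \<Rightarrow> complex poly \<Rightarrow> (int \<Rightarrow> complex poly) \<Rightarrow> (int \<Rightarrow> complex poly)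
    \<Rightarrow> bool" where
  "toeplitz_mult_cond n p F G \<longleftrightarrow> (\<forall>s\<in>{1..int n - 1}. \<forall>u\<in>{1..int n - 1}.
      p dvd F s * G (u - int n) - F (s - int n) * G u)"

lemma toeplitz_conv_diagonal:
  assumes R: "toeplitz_mult_cond n p F G" and "i + t < n" "j + t < n"
  shows "p dvd toeplitz_conv n F G (i + t) (j + t) - toeplitz_conv n F G i j"
  using assms(2,3)
proof (induction t)
  case 0
  then show ?case by simp
next
  case (Suc t)
  define s where "s = int (i + t) + 1"
  define u where "u = int n - 1 - int (j + t)"
  have "s \<in> {1..int n - 1}" "u \<in> {1..int n - 1}" and e: "u - int n = - int (j + t) - 1"
    using Suc.prems unfolding s_def u_def by auto
  then have "p dvd F s * G (u - int n) - F (s - int n) * G u"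
    using R unfolding toeplitz_mult_cond_def by blast
  moreover have "toeplitz_conv n F G (Suc (i + t)) (Suc (j + t)) - toeplitz_conv n F G (i + t) (j + t)
      = F s * G (- int (j + t) - 1) - F (s - int n) * G u"
    unfolding s_def u_def by (rule toeplitz_conv_Suc_Suc) (use Suc.prems in auto)
  ultimately have "p dvd toeplitz_conv n F G (Suc (i + t)) (Suc (j + t)) - toeplitz_conv n F G (i + t) (j + t)"
    unfolding e by simp
  from dvd_add[OF this Suc.IH] Suc.prems show ?case by simp
qed

definition toeplitz_mult_symbol :: "nat \<Rightarrow> (int \<Rightarrow> complex poly) \<Rightarrow> (int \<Rightarrow> complex poly) \<Rightarrow> int
    \<Rightarrow> complex poly" where
  "toeplitz_mult_symbol n F G m = toeplitz_conv n F G (nat m) (nat (- m))"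

lemma toeplitz_conv_eq_mult_symbol:
  assumes R: "toeplitz_mult_cond n p F G" and "i < n" "j < n"
  shows "p dvd toeplitz_conv n F G i j - toeplitz_mult_symbol n F G (int i - int j)"
proof -
  define t where "t = min i j"
  have "nat (int i - int j) = i - t" "nat (- (int i - int j)) = j - t" "i - t + t = i" "j - t + t = j"
    unfolding t_def by auto
  then show ?thesis
    using toeplitz_conv_diagonal[OF R, of "i - t" t "j - t"] assms(2,3)
    unfolding toeplitz_mult_symbol_def by simp
qed

lemma mult_poly_toeplitz:
  assumes M: "M \<in> carrier_mat d d" and p: "is_min_poly M p" and R: "toeplitz_mult_cond n p F G"
  shows "poly_toeplitz n d M F * poly_toeplitz n d M G = poly_toeplitz n d M (toeplitz_mult_symbol n F G)"
proof (rule poly_toeplitz_eqI)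
  fix i j r c assume ij: "i < n" "j < n" and rc: "r < d" "c < d"
  have "poly_mat (toeplitz_conv n F G i j) M = poly_mat (toeplitz_mult_symbol n F G (int i - int j)) M"
    using poly_mat_eq_iff[OF M p] toeplitz_conv_eq_mult_symbol[OF R ij] by blast
  then show "(poly_toeplitz n d M F * poly_toeplitz n d M G) $$ (i*d + r, j*d + c)
      = poly_toeplitz n d M (toeplitz_mult_symbol n F G) $$ (i*d + r, j*d + c)"
    by (simp add: index_mult_poly_toeplitz[OF M ij rc] index_poly_toeplitz[OF ij rc])
qed (metis mult_carrier_mat poly_toeplitz_carrier)

lemma toeplitz_mult_cond_if_mult_toeplitz:
  assumes M: "M \<in> carrier_mat d d" and p: "is_min_poly M p"
    and H: "poly_toeplitz n d M F * poly_toeplitz n d M G = poly_toeplitz n d M H"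
  shows "toeplitz_mult_cond n p F G"
  unfolding toeplitz_mult_cond_def
proof (intro ballI)
  have conv_H: "p dvd toeplitz_conv n F G i j - H (int i - int j)" if ij: "i < n" "j < n" for i j
  proof -
    have "poly_mat (toeplitz_conv n F G i j) M = poly_mat (H (int i - int j)) M"
    proof (rule eq_matI)
      fix r c assume "r < dim_row (poly_mat (H (int i - int j)) M)" "c < dim_col (poly_mat (H (int i - int j)) M)"
      then have rc: "r < d" "c < d" using M by auto
      from arg_cong[OF H, of "\<lambda>X. X $$ (i*d + r, j*d + c)"]
      show "poly_mat (toeplitz_conv n F G i j) M $$ (r, c) = poly_mat (H (int i - int j)) M $$ (r, c)"
        unfolding index_mult_poly_toeplitz[OF M ij rc] index_poly_toeplitz[OF ij rc] .
    qed (use M in auto)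
    then show ?thesis using poly_mat_eq_iff[OF M p] by blast
  qed
  fix s u assume su: "s \<in> {1..int n - 1}" "u \<in> {1..int n - 1}"
  define i where "i = nat (s - 1)"
  define j where "j = nat (int n - 1 - u)"
  have ij: "Suc i < n" "Suc j < n" "int i + 1 = s" "- int j - 1 = u - int n" "int n - 1 - int j = u"
    using su unfolding i_def j_def by auto
  have "p dvd toeplitz_conv n F G (Suc i) (Suc j) - toeplitz_conv n F G i j"
    using dvd_diff[OF conv_H[of "Suc i" "Suc j"] conv_H[of i j]] ij(1,2) by simp
  then show "p dvd F s * G (u - int n) - F (s - int n) * G u"
    unfolding toeplitz_conv_Suc_Suc[OF ij(1,2)] ij(3-5) .
qed


section \<open>The algebras \<open>\<frak>B(p\<^sub>+, p\<^sub>-, \<chi>)\<close>\<close>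

definition frakB_symbol :: "nat \<Rightarrow> complex poly \<Rightarrow> complex poly \<Rightarrow> complex poly \<Rightarrow> complex poly
    \<Rightarrow> (int \<Rightarrow> complex poly) \<Rightarrow> bool" where
  "frakB_symbol n q pp pm chi F \<longleftrightarrow> (\<forall>i\<in>{1..int n - 1}. \<exists>a a'.
      F i = pp * a \<and> F (i - int n) = pm * a' \<and> q dvd a - chi * a')"

lemma mem_frakB_iff:
  assumes M: "M \<in> carrier_mat d d"
  shows "A \<in> frakB n d M p pp pm chi \<longleftrightarrow>
    (\<exists>F. A = poly_toeplitz n d M F \<and> frakB_symbol n (p div (pp * pm)) pp pm chi F)"
    (is "_ \<longleftrightarrow> (\<exists>F. _ \<and> frakB_symbol n ?q pp pm chi F)")
proof
  assume "\<exists>F. A = poly_toeplitz n d M F \<and> frakB_symbol n ?q pp pm chi F"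
  then obtain F where A: "A = poly_toeplitz n d M F" and F: "frakB_symbol n ?q pp pm chi F" by blast
  have "\<exists>a a'. poly_mat (F i) M = poly_mat pp M * poly_mat a M \<and>
      poly_mat (F (i - int n)) M = poly_mat pm M * poly_mat a' M \<and> ?q dvd a - chi * a'"
    if "i \<in> {1..int n - 1}" for i
    using F that unfolding frakB_symbol_def by (metis poly_mat_mult[OF M])
  then show "A \<in> frakB n d M p pp pm chi"
    unfolding frakB_def A poly_toeplitz_def polys_in_def by blast
next
  assume "A \<in> frakB n d M p pp pm chi"
  then obtain B where A: "A = block_toeplitz n d B" and B: "\<forall>m. \<bar>m\<bar> < int n \<longrightarrow> B m \<in> polys_in M"
    and Bc: "\<forall>i\<in>{1..int n - 1}. \<exists>a a'. B i = poly_mat pp M * poly_mat a M \<and>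
          B (i - int n) = poly_mat pm M * poly_mat a' M \<and> ?q dvd a - chi * a'"
    unfolding frakB_def by blast
  obtain a a' where a: "\<forall>i\<in>{1..int n - 1}. B i = poly_mat pp M * poly_mat (a i) M \<and>
      B (i - int n) = poly_mat pm M * poly_mat (a' i) M \<and> ?q dvd a i - chi * a' i"
    using bchoice[OF Bc] by (metis split_beta)
  define f0 where "f0 = (SOME f. B 0 = poly_mat f M)"
  define F where "F m = (if 0 < m then pp * a m else if m < 0 then pm * a' (m + int n) else f0)" for m
  have "B m = poly_mat (F m) M" if "\<bar>m\<bar> < int n" for m
  proof -
    have "m = 0 \<or> (0 < m \<and> m \<in> {1..int n - 1}) \<or> (m < 0 \<and> m + int n \<in> {1..int n - 1})"
      using that by auto
    moreover have "B 0 = poly_mat f0 M" if "m = 0"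
      unfolding f0_def by (rule someI_ex) (use B \<open>\<bar>m\<bar> < int n\<close> that in \<open>auto simp: polys_in_def\<close>)
    moreover have "B m = poly_mat (pm * a' (m + int n)) M" if "m + int n \<in> {1..int n - 1}"
      using a[rule_format, OF that] by (simp add: poly_mat_mult[OF M])
    ultimately show ?thesis using a unfolding F_def by (auto simp: poly_mat_mult[OF M])
  qed
  then have "A = poly_toeplitz n d M F" unfolding A poly_toeplitz_def by (rule block_toeplitz_cong)
  moreover have "frakB_symbol n ?q pp pm chi F"
    unfolding frakB_symbol_def F_def using a by auto
  ultimately show "\<exists>F. A = poly_toeplitz n d M F \<and> frakB_symbol n ?q pp pm chi F" by blast
qed

lemma frakB_symbol_0: "frakB_symbol n q pp pm chi (\<lambda>_. 0)"
  unfolding frakB_symbol_def by (auto intro!: exI[of _ 0])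

lemma frakB_symbol_add:
  assumes "frakB_symbol n q pp pm chi F" "frakB_symbol n q pp pm chi G"
  shows "frakB_symbol n q pp pm chi (\<lambda>m. F m + G m)"
  unfolding frakB_symbol_def
proof
  fix i assume "i \<in> {1..int n - 1}"
  then obtain a a' b b' where a: "F i = pp * a" "F (i - int n) = pm * a'" "q dvd a - chi * a'"
    and b: "G i = pp * b" "G (i - int n) = pm * b'" "q dvd b - chi * b'"
    using assms unfolding frakB_symbol_def by meson
  have "(a + b) - chi * (a' + b') = (a - chi * a') + (b - chi * b')" by (simp add: algebra_simps)
  then have "q dvd (a + b) - chi * (a' + b')" using a(3) b(3) by (metis dvd_add)
  then show "\<exists>c c'. F i + G i = pp * c \<and> F (i - int n) + G (i - int n) = pm * c' \<and> q dvd c - chi * c'"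
    using a b by (metis distrib_left)
qed

lemma frakB_symbol_smult:
  assumes "frakB_symbol n q pp pm chi F"
  shows "frakB_symbol n q pp pm chi (\<lambda>m. Polynomial.smult e (F m))"
  unfolding frakB_symbol_def
proof
  fix i assume "i \<in> {1..int n - 1}"
  then obtain a a' where a: "F i = pp * a" "F (i - int n) = pm * a'" "q dvd a - chi * a'"
    using assms unfolding frakB_symbol_def by meson
  have "Polynomial.smult e a - chi * Polynomial.smult e a' = Polynomial.smult e (a - chi * a')"
    by (simp add: smult_diff_right)
  then have "q dvd Polynomial.smult e a - chi * Polynomial.smult e a'" using a(3) by (simp add: dvd_smult)
  then show "\<exists>b b'. Polynomial.smult e (F i) = pp * b \<and> Polynomial.smult e (F (i - int n)) = pm * b'
      \<and> q dvd b - chi * b'"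
    using a by (intro exI[of _ "Polynomial.smult e a"] exI[of _ "Polynomial.smult e a'"]) simp
qed

lemma toeplitz_mult_cond_if_frakB_symbol:
  assumes F: "frakB_symbol n q pp pm chi F" and G: "frakB_symbol n q pp pm chi G"
  shows "toeplitz_mult_cond n (pp * pm * q) F G"
  unfolding toeplitz_mult_cond_def
proof (intro ballI)
  fix s u assume "s \<in> {1..int n - 1}" "u \<in> {1..int n - 1}"
  then obtain a a' b b' where a: "F s = pp * a" "F (s - int n) = pm * a'" "q dvd a - chi * a'"
    and b: "G u = pp * b" "G (u - int n) = pm * b'" "q dvd b - chi * b'"
    using F G unfolding frakB_symbol_def by meson
  have "a * b' - a' * b = (a - chi * a') * b' - a' * (b - chi * b')" by (simp add: algebra_simps)
  then have "q dvd a * b' - a' * b" using a(3) b(3) by simp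
  moreover have "F s * G (u - int n) - F (s - int n) * G u = pp * pm * (a * b' - a' * b)"
    unfolding a b by (simp add: algebra_simps)
  ultimately show "pp * pm * q dvd F s * G (u - int n) - F (s - int n) * G u" by simp
qed


lemma sum_lessThan_rotate:
  fixes n s :: nat
  assumes "s \<le> n"
  shows "(\<Sum>k<n. f (if k < s then k + n - s else k - s)) = (\<Sum>k<n. f k)"
  by (rule sum.reindex_bij_witness[where j = "\<lambda>k. if k < s then k + n - s else k - s"
      and i = "\<lambda>k. if k < n - s then k + s else k + s - n"]) (use assms in auto)

text \<open>
  The \<open>k\<close>-th term of the symbol of a product at \<open>s\<close> is matched with the term of the symbol at
  \<open>s - n\<close> whose index is \<open>k - s\<close> taken modulo \<open>n\<close>.
\<close>
lemma frakB_symbol_mult_term: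
  fixes s k :: int
  assumes F: "frakB_symbol n q pp pm chi F" and G: "frakB_symbol n q pp pm chi G"
    and s: "s \<in> {1..int n - 1}" and k: "0 \<le> k" "k \<le> int n - 1"
    and k': "k' = (if k < s then k + int n - s else k - s)"
  shows "\<exists>u v. F (s - k) * G k = pp * u \<and> F (- k') * G (k' - int n + s) = pm * v \<and> q dvd u - chi * v"
proof (cases k s rule: linorder_cases)
  case less
  then have "s - k \<in> {1..int n - 1}" using s k by auto
  then obtain a a' where a: "F (s - k) = pp * a" "F (s - k - int n) = pm * a'" "q dvd a - chi * a'"
    using F unfolding frakB_symbol_def by blast
  have "- k' = s - k - int n" "k' - int n + s = k" using less k' by auto
  then have "F (- k') = F (s - k - int n)" "G (k' - int n + s) = G k" by (metis arg_cong)+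
  moreover have "q dvd a * G k - chi * (a' * G k)"
    using dvd_mult2[OF a(3), of "G k"] by (simp add: algebra_simps)
  ultimately have "F (s - k) * G k = pp * (a * G k) \<and> F (- k') * G (k' - int n + s) = pm * (a' * G k)
      \<and> q dvd a * G k - chi * (a' * G k)"
    using a(1,2) by simp
  then show ?thesis by blast
next
  case equal
  obtain b b' where b: "G s = pp * b" "G (s - int n) = pm * b'" "q dvd b - chi * b'"
    using G s unfolding frakB_symbol_def by blast
  have "F (- k') = F 0" "G (k' - int n + s) = G (s - int n)" "k = s" using equal k' by auto
  moreover have "q dvd F 0 * b - chi * (F 0 * b')"
    using dvd_mult[OF b(3), of "F 0"] by (simp add: algebra_simps)
  ultimately have "F (s - k) * G k = pp * (F 0 * b) \<and> F (- k') * G (k' - int n + s) = pm * (F 0 * b')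
      \<and> q dvd F 0 * b - chi * (F 0 * b')"
    using b(1,2) by (simp add: algebra_simps)
  then show ?thesis by blast
next
  case greater
  then have "s - k + int n \<in> {1..int n - 1}" "k \<in> {1..int n - 1}" using s k by auto
  then obtain a a' b b' where a: "F (s - k + int n) = pp * a" "F (s - k) = pm * a'"
    and b: "G k = pp * b" "G (k - int n) = pm * b'" "q dvd b - chi * b'"
    using F G unfolding frakB_symbol_def by (metis add_diff_cancel_right')
  have "- k' = s - k" "k' - int n + s = k - int n" using greater k' by auto
  then have "F (- k') = F (s - k)" "G (k' - int n + s) = G (k - int n)" by (metis arg_cong)+
  moreover have "q dvd pm * a' * b - chi * (a' * (pm * b'))"
    using dvd_mult[OF b(3), of "pm * a'"] by (simp add: algebra_simps)
  ultimately have "F (s - k) * G k = pp * (pm * a' * b) \<and>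
      F (- k') * G (k' - int n + s) = pm * (a' * (pm * b')) \<and> q dvd pm * a' * b - chi * (a' * (pm * b'))"
    using a b(1,2) by (simp add: algebra_simps)
  then show ?thesis by blast
qed

lemma frakB_symbol_mult:
  assumes F: "frakB_symbol n q pp pm chi F" and G: "frakB_symbol n q pp pm chi G"
  shows "frakB_symbol n q pp pm chi (toeplitz_mult_symbol n F G)"
  unfolding frakB_symbol_def
proof
  fix s assume s: "s \<in> {1..int n - 1}"
  moreover define s0 where "s0 = nat s"
  ultimately have s0: "s = int s0" "1 \<le> s0" "s0 < n" by auto
  define k' where "k' k = (if k < s0 then k + n - s0 else k - s0)" for k :: nat
  have "\<exists>uv. F (s - int k) * G (int k) = pp * fst uv \<and>
      F (- int (k' k)) * G (int (k' k) - int n + s) = pm * snd uv \<and> q dvd fst uv - chi * snd uv"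
    if "k < n" for k
    using frakB_symbol_mult_term[OF F G s, of "int k" "int (k' k)"] s0 that unfolding k'_def by auto
  then obtain uv where uv: "\<And>k. k < n \<Longrightarrow> F (s - int k) * G (int k) = pp * fst (uv k) \<and>
      F (- int (k' k)) * G (int (k' k) - int n + s) = pm * snd (uv k) \<and> q dvd fst (uv k) - chi * snd (uv k)"
    by metis
  have "toeplitz_mult_symbol n F G s = (\<Sum>k<n. F (s - int k) * G (int k))"
    unfolding toeplitz_mult_symbol_def toeplitz_conv_def s0(1) by simp
  also have "\<dots> = pp * (\<Sum>k<n. fst (uv k))" using uv by (simp add: sum_distrib_left)
  finally have upper: "toeplitz_mult_symbol n F G s = pp * (\<Sum>k<n. fst (uv k))" .
  have "toeplitz_mult_symbol n F G (s - int n) = (\<Sum>k<n. F (- int k) * G (int k - int n + s))"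
    unfolding toeplitz_mult_symbol_def toeplitz_conv_def using s0 by (simp add: nat_diff_distrib algebra_simps)
  also have "\<dots> = (\<Sum>k<n. F (- int (k' k)) * G (int (k' k) - int n + s))"
    unfolding k'_def by (rule sum_lessThan_rotate[symmetric]) (use s0 in auto)
  also have "\<dots> = pm * (\<Sum>k<n. snd (uv k))" using uv by (simp add: sum_distrib_left)
  finally have lower: "toeplitz_mult_symbol n F G (s - int n) = pm * (\<Sum>k<n. snd (uv k))" .
  have "q dvd (\<Sum>k<n. fst (uv k) - chi * snd (uv k))" using uv by (intro dvd_sum) auto
  then have "q dvd (\<Sum>k<n. fst (uv k)) - chi * (\<Sum>k<n. snd (uv k))"
    by (simp add: sum_subtractf sum_distrib_left)
  with upper lower show "\<exists>a a'. toeplitz_mult_symbol n F G s = pp * a \<and>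
      toeplitz_mult_symbol n F G (s - int n) = pm * a' \<and> q dvd a - chi * a'" by blast
qed

lemma frakB_subalgebra:
  assumes M: "M \<in> carrier_mat d d" and p: "is_min_poly M p" and ppm: "pp * pm dvd p"
  shows "is_subalgebra (n*d) (frakB n d M p pp pm chi)" and "frakB n d M p pp pm chi \<subseteq> toeplitz_alg n d M"
proof -
  let ?q = "p div (pp * pm)"
  have p_eq: "pp * pm * ?q = p" using ppm by simp
  note mem = mem_frakB_iff[OF M]
  show "frakB n d M p pp pm chi \<subseteq> toeplitz_alg n d M"
    using mem mem_toeplitz_alg_iff by blast
  show "is_subalgebra (n*d) (frakB n d M p pp pm chi)"
    unfolding is_subalgebra_def
  proof (intro conjI ballI allI)
    show "frakB n d M p pp pm chi \<subseteq> carrier_mat (n*d) (n*d)" using mem by auto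
    show "0\<^sub>m (n*d) (n*d) \<in> frakB n d M p pp pm chi"
      using mem poly_toeplitz_0[OF M] frakB_symbol_0 by metis
  next
    fix A B assume "A \<in> frakB n d M p pp pm chi" "B \<in> frakB n d M p pp pm chi"
    then obtain F G where A: "A = poly_toeplitz n d M F" and F: "frakB_symbol n ?q pp pm chi F"
      and B: "B = poly_toeplitz n d M G" and G: "frakB_symbol n ?q pp pm chi G"
      unfolding mem by blast
    show "A + B \<in> frakB n d M p pp pm chi"
      unfolding mem A B poly_toeplitz_add[OF M] using frakB_symbol_add[OF F G] by blast
    have "toeplitz_mult_cond n p F G" using toeplitz_mult_cond_if_frakB_symbol[OF F G] p_eq by simp
    then have "A * B = poly_toeplitz n d M (toeplitz_mult_symbol n F G)"
      unfolding A B by (rule mult_poly_toeplitz[OF M p])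
    then show "A * B \<in> frakB n d M p pp pm chi"
      unfolding mem using frakB_symbol_mult[OF F G] by blast
  next
    fix c A assume "A \<in> frakB n d M p pp pm chi"
    then obtain F where A: "A = poly_toeplitz n d M F" and F: "frakB_symbol n ?q pp pm chi F"
      unfolding mem by blast
    show "c \<cdot>\<^sub>m A \<in> frakB n d M p pp pm chi"
      unfolding mem A poly_toeplitz_smult[OF M] using frakB_symbol_smult[OF F] by blast
  qed
qed


section \<open>Pairs of polynomials that are proportional modulo \<open>p\<close>\<close>

lemma common_root_if_not_coprime:
  fixes f g :: "'a::alg_closed_field poly"
  assumes "g \<noteq> 0" "\<not> coprime f g"
  obtains z where "poly f z = 0" "poly g z = 0"
proof -
  obtain h where h: "h dvd f" "h dvd g" "\<not> is_unit h" using assms(2) coprime_def by blast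
  then have "h \<noteq> 0" using assms(1) by auto
  with h(3) have "degree h > 0" using is_unit_iff_degree by blast
  then obtain z where "poly h z = 0" using alg_closed_imp_poly_has_root by blast
  with h(1,2) show ?thesis using that by (meson dvd_trans poly_eq_0_iff_dvd)
qed

lemma exists_coprime_translate:
  fixes c q p :: "'a::{alg_closed_field,field_char_0} poly"
  assumes p: "p \<noteq> 0" and roots: "\<And>z. poly p z = 0 \<Longrightarrow> poly q z = 0 \<Longrightarrow> poly c z \<noteq> 0"
  obtains e where "coprime (c + Polynomial.smult e q) p"
proof -
  text \<open>Avoid the finitely many values \<open>- c(z)/q(z)\<close> at roots \<open>z\<close> of \<open>p\<close> with \<open>q(z) \<noteq> 0\<close>.\<close>
  have "finite ((\<lambda>z. - poly c z / poly q z) ` {z. poly p z = 0})"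
    using poly_roots_finite[OF p] by simp
  then obtain e where e: "e \<notin> (\<lambda>z. - poly c z / poly q z) ` {z. poly p z = 0}"
    using ex_new_if_finite[OF infinite_UNIV_char_0] by blast
  have "coprime (c + Polynomial.smult e q) p"
  proof (rule ccontr)
    assume "\<not> coprime (c + Polynomial.smult e q) p"
    then obtain z where z: "poly c z + e * poly q z = 0" "poly p z = 0"
      using common_root_if_not_coprime[OF p] by (metis poly_add poly_smult)
    show False
    proof (cases "poly q z = 0")
      case True
      then show False using z roots by simp
    next
      case False
      then have "e = - poly c z / poly q z" using z(1) by (simp add: field_simps add_eq_0_iff)
      then show False using e z(2) by blast
    qed
  qed
  then show ?thesis by (rule that)
qed

text \<open>
  The module generated by \<open>(q, 0)\<close> and the swapped pairs \<open>(b, a)\<close>: its first components form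
  the ideal generated by \<open>q\<close> and all \<open>b\<close>, and each element records a matching combination
  of the \<open>a\<close> as second component.
\<close>
inductive_set pair_span :: "'a::comm_ring_1 \<Rightarrow> ('a \<times> 'a) set \<Rightarrow> ('a \<times> 'a) set" for q P where
  swap: "(a, b) \<in> P \<Longrightarrow> (b, a) \<in> pair_span q P"
| modulus: "(q, 0) \<in> pair_span q P"
| add: "(y, x) \<in> pair_span q P \<Longrightarrow> (y', x') \<in> pair_span q P \<Longrightarrow> (y + y', x + x') \<in> pair_span q P"
| mult: "(y, x) \<in> pair_span q P \<Longrightarrow> (c * y, c * x) \<in> pair_span q P"

lemma pair_span_dvd:
  assumes "(y, x) \<in> pair_span q P" and rel: "\<forall>(a, b)\<in>P. \<forall>(a', b')\<in>P. q dvd a * b' - b * a'"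
    and "(a, b) \<in> P"
  shows "q dvd a * y - b * x"
  using assms(1)
proof (induction rule: pair_span.induct)
  case (swap a' b')
  then show ?case using rel assms(3) by blast
next
  case (add y x y' x')
  have "a * (y + y') - b * (x + x') = (a * y - b * x) + (a * y' - b * x')" by (simp add: algebra_simps)
  then show ?case using add.IH by (metis dvd_add)
next
  case (mult y x c)
  have "a * (c * y) - b * (c * x) = c * (a * y - b * x)" by (simp add: algebra_simps)
  then show ?case using mult.IH by simp
qed simp

lemma one_in_pair_span:
  fixes q :: "'a::field poly"
  assumes q: "q \<noteq> 0" and units: "\<And>g. g dvd q \<Longrightarrow> \<forall>(a, b)\<in>P. g dvd b \<Longrightarrow> is_unit g"
  obtains chi where "(1, chi) \<in> pair_span q P"
proof -
  define Y where "Y = {y. y \<noteq> 0 \<and> (\<exists>x. (y, x) \<in> pair_span q P)}"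
  have "q \<in> Y" unfolding Y_def using q pair_span.modulus by blast
  define g where "g = arg_min degree (\<lambda>y. y \<in> Y)"
  from arg_min_nat_lemma[of "\<lambda>y. y \<in> Y" q degree, OF \<open>q \<in> Y\<close>]
  have "g \<in> Y" and g_min: "\<And>y. y \<in> Y \<Longrightarrow> degree g \<le> degree y" unfolding g_def by auto
  then obtain x where g0: "g \<noteq> 0" and gx: "(g, x) \<in> pair_span q P" unfolding Y_def by auto
  have g_dvd: "g dvd y" if "(y, x') \<in> pair_span q P" for y x'
  proof (rule ccontr)
    assume "\<not> g dvd y"
    then have "y mod g \<noteq> 0" "degree (y mod g) < degree g"
      using g0 by (simp_all add: mod_eq_0_iff_dvd degree_mod_less_degree)
    moreover have "(y + - (y div g) * g, x' + - (y div g) * x) \<in> pair_span q P"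
      using pair_span.add[OF that pair_span.mult[OF gx]] .
    then have "(y mod g, x' - (y div g) * x) \<in> pair_span q P"
      by (simp add: minus_div_mult_eq_mod[symmetric])
    ultimately have "y mod g \<in> Y" unfolding Y_def by blast
    with g_min \<open>degree (y mod g) < degree g\<close> show False by fastforce
  qed
  have "is_unit g" using units g_dvd pair_span.modulus pair_span.swap by blast
  then obtain c where c: "g = [:c:]" "c \<noteq> 0" by (metis is_unit_poly_iff g0 pCons_0_0)
  have "([:1/c:] * g, [:1/c:] * x) \<in> pair_span q P" by (rule pair_span.mult[OF gx])
  moreover have "[:1/c:] * g = 1" using c by (simp add: one_pCons)
  ultimately show ?thesis using that by simp
qed

lemma exists_coprime_multiplier:
  fixes p q :: "'a::{alg_closed_field,field_char_0} poly"
  assumes p: "p \<noteq> 0" and "q dvd p"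
    and rel: "\<forall>(a, b)\<in>P. \<forall>(a', b')\<in>P. q dvd a * b' - b * a'"
    and units_a: "\<And>g. g dvd q \<Longrightarrow> \<forall>(a, b)\<in>P. g dvd a \<Longrightarrow> is_unit g"
    and units_b: "\<And>g. g dvd q \<Longrightarrow> \<forall>(a, b)\<in>P. g dvd b \<Longrightarrow> is_unit g"
  obtains chi where "coprime chi p" "\<forall>(a, b)\<in>P. q dvd a - chi * b"
proof -
  have "q \<noteq> 0" using p \<open>q dvd p\<close> by auto
  then obtain chi0 where chi0: "(1, chi0) \<in> pair_span q P" using one_in_pair_span units_b by blast
  have cong: "q dvd a - chi0 * b" if "(a, b) \<in> P" for a b
    using pair_span_dvd[OF chi0 rel that] by (simp add: mult.commute)
  have "poly chi0 z \<noteq> 0" if "poly q z = 0" for z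
  proof
    assume "poly chi0 z = 0"
    then have lin: "[:-z, 1:] dvd chi0" "[:-z, 1:] dvd q" using that by (auto simp: poly_eq_0_iff_dvd)
    have "[:-z, 1:] dvd a" if "(a, b) \<in> P" for a b
    proof -
      have "[:-z, 1:] dvd (a - chi0 * b) + chi0 * b"
        using dvd_trans[OF lin(2) cong[OF that]] lin(1) by (intro dvd_add) simp_all
      then show ?thesis by simp
    qed
    then have "is_unit [:-z, 1:]" using units_a lin(2) by blast
    then show False by (simp add: is_unit_poly_iff)
  qed
  then obtain e where e: "coprime (chi0 + Polynomial.smult e q) p"
    using exists_coprime_translate[OF p] by blast
  have "q dvd a - (chi0 + Polynomial.smult e q) * b" if "(a, b) \<in> P" for a b
  proof -
    have "a - (chi0 + Polynomial.smult e q) * b = (a - chi0 * b) - q * Polynomial.smult e b"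
      by (simp add: algebra_simps)
    then show ?thesis using cong[OF that] by (metis dvd_diff dvd_triv_left)
  qed
  with e show ?thesis using that by blast
qed


lemma is_unit_if_dvd_Gcd_cofactors:
  fixes g :: "'a::factorial_ring_gcd"
  assumes "Gcd Z \<noteq> 0" and "\<And>z. z \<in> Z \<Longrightarrow> g dvd z div Gcd Z"
  shows "is_unit g"
proof -
  have "g * Gcd Z dvd z" if "z \<in> Z" for z
  proof -
    have "g * Gcd Z dvd z div Gcd Z * Gcd Z" using assms(2)[OF that] by (rule mult_dvd_mono) simp
    then show ?thesis using Gcd_dvd[OF that] by simp
  qed
  then have "g * Gcd Z dvd 1 * Gcd Z" by (simp add: Gcd_greatest)
  then show ?thesis using assms(1) dvd_times_right_cancel_iff[of "Gcd Z" g 1] by blast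
qed

lemma proportional_pairs_parametrization:
  fixes p :: "complex poly" and S :: "(complex poly \<times> complex poly) set"
  assumes p: "p \<noteq> 0"
    and proportional: "\<And>x y x' y'. (x, y) \<in> S \<Longrightarrow> (x', y') \<in> S \<Longrightarrow> p dvd x * y' - y * x'"
  obtains pp pm chi where "pp * pm dvd p" "coprime chi p"
    "\<And>x y. (x, y) \<in> S \<Longrightarrow> \<exists>a b. x = pp * a \<and> y = pm * b \<and> p div (pp * pm) dvd a - chi * b"
proof -
  define pp where "pp = Gcd (insert p (fst ` S))"
  define pm where "pm = Gcd (insert (p div pp) (snd ` S))"
  define q where "q = p div (pp * pm)"
  have "pp dvd p" "pm dvd p div pp" unfolding pp_def pm_def by simp_all
  then have pp0: "pp \<noteq> 0" and pm0: "pm \<noteq> 0" and ppm: "pp * pm dvd p"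
    using p by (auto simp: dvd_div_iff_mult)
  have p_eq: "p = pp * pm * q" and p_div: "p div pp = pm * q"
    using ppm pp0 unfolding q_def by (auto simp: dvd_div_iff_mult)
  have S_dvd: "pp dvd x" "pm dvd y" if "(x, y) \<in> S" for x y
  proof -
    have "x \<in> insert p (fst ` S)" "y \<in> insert (p div pp) (snd ` S)" using that by force+
    then show "pp dvd x" "pm dvd y" unfolding pp_def pm_def by (blast intro: Gcd_dvd)+
  qed
  define P where "P = (\<lambda>(x, y). (x div pp, y div pm)) ` S"
  have rel: "\<forall>(a, b)\<in>P. \<forall>(a', b')\<in>P. q dvd a * b' - b * a'"
  proof (clarsimp simp: P_def)
    fix x y x' y' assume xy: "(x, y) \<in> S" "(x', y') \<in> S"
    obtain a b a' b' where ab: "x = pp * a" "y = pm * b" "x' = pp * a'" "y' = pm * b'"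
      using S_dvd[OF xy(1)] S_dvd[OF xy(2)] by (metis dvdE)
    have "pp * pm * q dvd x * y' - y * x'" using proportional[OF xy] p_eq by simp
    also have "x * y' - y * x' = pp * pm * (a * b' - b * a')" unfolding ab by (simp add: algebra_simps)
    finally show "q dvd x div pp * (y' div pm) - y div pm * (x' div pp)"
      using pp0 pm0 unfolding ab by simp
  qed
  have units_a: "is_unit g" if "g dvd q" "\<forall>(a, b)\<in>P. g dvd a" for g
  proof (rule is_unit_if_dvd_Gcd_cofactors[of "insert p (fst ` S)", folded pp_def])
    show "g dvd z div pp" if "z \<in> insert p (fst ` S)" for z
      using that \<open>g dvd q\<close> \<open>\<forall>(a, b)\<in>P. g dvd a\<close> p_div unfolding P_def by auto
  qed (fact pp0)
  have units_b: "is_unit g" if "g dvd q" "\<forall>(a, b)\<in>P. g dvd b" for g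
  proof (rule is_unit_if_dvd_Gcd_cofactors[of "insert (p div pp) (snd ` S)", folded pm_def])
    show "g dvd z div pm" if "z \<in> insert (p div pp) (snd ` S)" for z
      using that \<open>g dvd q\<close> \<open>\<forall>(a, b)\<in>P. g dvd b\<close> p_div pm0 unfolding P_def by auto
  qed (fact pm0)
  obtain chi where "coprime chi p" "\<forall>(a, b)\<in>P. q dvd a - chi * b"
    using exists_coprime_multiplier[OF p _ rel units_a units_b] p_eq by (metis dvd_triv_right)
  moreover have "\<exists>a b. x = pp * a \<and> y = pm * b \<and> q dvd a - chi * b" if "(x, y) \<in> S" for x y
  proof (intro exI conjI)
    show "x = pp * (x div pp)" "y = pm * (y div pm)" using S_dvd[OF that] by simp_all
    have "(x div pp, y div pm) \<in> P" unfolding P_def using that by force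
    then show "q dvd x div pp - chi * (y div pm)" using calculation(2) by blast
  qed
  ultimately show ?thesis using that ppm unfolding q_def by blast
qed


section \<open>Maximal subalgebras\<close>

lemma subalgebra_subset_frakB:
  assumes M: "M \<in> carrier_mat d d" and p: "is_min_poly M p"
    and sub: "is_subalgebra (n*d) \<B>" and T: "\<B> \<subseteq> toeplitz_alg n d M"
  obtains pp pm chi where "pp * pm dvd p" "coprime chi p" "\<B> \<subseteq> frakB n d M p pp pm chi"
proof -
  have p0: "p \<noteq> 0" using p unfolding is_min_poly_def by auto
  have "\<forall>A\<in>\<B>. \<exists>F. A = poly_toeplitz n d M F" using T mem_toeplitz_alg_iff by blast
  then obtain F where F: "\<And>A. A \<in> \<B> \<Longrightarrow> A = poly_toeplitz n d M (F A)" by (metis bchoice)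
  have cond: "toeplitz_mult_cond n p (F A) (F B)" if "A \<in> \<B>" "B \<in> \<B>" for A B
  proof -
    have "A * B \<in> toeplitz_alg n d M" using sub T that unfolding is_subalgebra_def by blast
    then obtain H where "A * B = poly_toeplitz n d M H" using mem_toeplitz_alg_iff by blast
    then show ?thesis using F that by (intro toeplitz_mult_cond_if_mult_toeplitz[OF M p]) simp
  qed
  define S where "S = {(F A s, F A (s - int n)) | A s. A \<in> \<B> \<and> s \<in> {1..int n - 1}}"
  have proportional: "p dvd x * y' - y * x'" if "(x, y) \<in> S" "(x', y') \<in> S" for x y x' y'
    using that cond unfolding S_def toeplitz_mult_cond_def by blast
  obtain pp pm chi where ppm: "pp * pm dvd p" and chi: "coprime chi p" and pairs:
      "\<And>x y. (x, y) \<in> S \<Longrightarrow> \<exists>a b. x = pp * a \<and> y = pm * b \<and> p div (pp * pm) dvd a - chi * b"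
    using proportional_pairs_parametrization[OF p0 proportional] by blast
  have "frakB_symbol n (p div (pp * pm)) pp pm chi (F A)" if "A \<in> \<B>" for A
    unfolding frakB_symbol_def using pairs that unfolding S_def by blast
  then have "\<B> \<subseteq> frakB n d M p pp pm chi" using F mem_frakB_iff[OF M] by blast
  with ppm chi show ?thesis by (rule that)
qed

theorem theorem7p5:
  fixes n d :: nat and M :: "complex mat" and p :: "complex poly" and \<B> :: "complex mat set"
  assumes "n \<ge> 2"
    and "M \<in> carrier_mat d d"
    and "nonderogatory M"
    and "is_min_poly M p"
    and "maximal_subalgebra_of (n*d) (toeplitz_alg n d M) \<B>"
  shows "\<exists>pp pm chi :: complex poly. (pp * pm) dvd p \<and> coprime chi p \<and>
           \<B> = frakB n d M p pp pm chi"
proof -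
  have sub: "is_subalgebra (n*d) \<B>" and T: "\<B> \<subseteq> toeplitz_alg n d M"
    and maximal: "\<And>S. is_subalgebra (n*d) S \<Longrightarrow> S \<subseteq> toeplitz_alg n d M \<Longrightarrow> \<B> \<subseteq> S \<Longrightarrow> S = \<B>"
    using assms(5) unfolding maximal_subalgebra_of_def by auto
  obtain pp pm chi where ppm: "pp * pm dvd p" and chi: "coprime chi p"
    and "\<B> \<subseteq> frakB n d M p pp pm chi"
    using subalgebra_subset_frakB[OF assms(2,4) sub T] .
  moreover note frakB_subalgebra[OF assms(2,4) ppm, of n chi]
  ultimately have "frakB n d M p pp pm chi = \<B>" using maximal by blast
  with ppm chi show ?thesis by blast
qed

end
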